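(* Let $\varphi$ be a rational self-map of $\mathbb{D}$ having order of contact $n$ (an even positive integer) with $\partial\mathbb{D}$ at $\zeta\in\partial\mathbb{D}$, let $\lambda=\varphi(\zeta)$, and let $\sigma$ be a branch of $\varphi_e^{-1}$ defined on a neighborhood of $\lambda$ with $\sigma(\lambda)=\zeta$. Then $$D_n(\sigma\circ\varphi,\zeta)=\Big(\zeta,1,0,\dots,0,\frac{c}{\varphi'(\zeta)}\Big),\qquad D_n(\varphi\circ\sigma,\lambda)=\Big(\lambda,1,0,\dots,0,\frac{c}{\varphi'(\zeta)^n}\Big),$$ where $c=\varphi^{(n)}(\zeta)-\varphi_e^{(n)}(\zeta)\neq0$.
   Context: $\varphi_e=\rho\circ\varphi\circ\rho$ with $\rho(z)=1/\bar z$ (so $\varphi_e$ is analytic near $\zeta$ and $\varphi_e(\zeta)=\lambda$). For $h$ analytic at $z$, $D_n(h,z)=(h(z),h'(z),\dots,h^{(n)}(z))$. Order of contact $n$ at $\zeta$: $\varphi(\zeta)\in\partial\mathbb{D}$ and $\frac{1-|\varphi(e^{i\theta})|^2}{|\varphi(\zeta)-\varphi(e^{i\theta})|^n}$ is bounded above and away from zero as $e^{i\theta}\to\zeta$. *)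

theory Defs
  imports "HOL-Analysis.Analysis" "HOL-Computational_Algebra.Polynomial"
begin

definition rational_self_map :: "(complex \<Rightarrow> complex) \<Rightarrow> bool" where
  "rational_self_map \<phi> \<longleftrightarrow>
     (\<exists>p q :: complex poly. (\<forall>z. \<phi> z = poly p z / poly q z) \<and>
        (\<forall>z \<in> ball 0 1. poly q z \<noteq> 0 \<and> \<phi> z \<in> ball 0 1))"

definition order_of_contact :: "(complex \<Rightarrow> complex) \<Rightarrow> nat \<Rightarrow> complex \<Rightarrow> bool" where
  "order_of_contact \<phi> n \<zeta> \<longleftrightarrow>
     norm (\<phi> \<zeta>) = 1 \<and>
     (\<exists>A B :: real. 0 < A \<and> 0 < B \<and>
        (\<forall>\<^sub>F w in at \<zeta> within sphere 0 1.
           A \<le> (1 - (norm (\<phi> w))\<^sup>2) / (norm (\<phi> \<zeta> - \<phi> w)) ^ n \<and>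
           (1 - (norm (\<phi> w))\<^sup>2) / (norm (\<phi> \<zeta> - \<phi> w)) ^ n \<le> B))"

definition rho :: "complex \<Rightarrow> complex" where
  "rho z = inverse (cnj z)"

definition phi_e :: "(complex \<Rightarrow> complex) \<Rightarrow> complex \<Rightarrow> complex" where
  "phi_e \<phi> = rho \<circ> \<phi> \<circ> rho"

definition Dn :: "(complex \<Rightarrow> complex) \<Rightarrow> complex \<Rightarrow> nat \<Rightarrow> complex list" where
  "Dn h z n = map (\<lambda>k. (deriv ^^ k) h z) [0..<Suc n]"

end

theory Submission
  imports Defs "HOL-Complex_Analysis.Complex_Analysis"
begin

text \<open>On the unit circle \<open>phi_e \<phi> = rho \<circ> \<phi>\<close>, so \<open>|phi_e \<phi> w - \<phi> w| = (1 - |\<phi> w|\<^sup>2) / |\<phi> w|\<close>, and the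
  order of contact makes this comparable to \<open>|w - \<zeta>|\<^sup>n\<close>. Hence \<open>phi_e \<phi> - \<phi>\<close> has a zero of exact
  order \<open>n\<close> at \<open>\<zeta>\<close>, say \<open>(w - \<zeta>)\<^sup>n h w\<close> with \<open>h \<zeta> \<noteq> 0\<close>: the two maps agree to order \<open>n - 1\<close> and
  \<open>c = - n! h \<zeta>\<close>. Since \<open>\<sigma>\<close> inverts \<open>phi_e \<phi>\<close>, replacing \<open>\<phi>\<close> by \<open>phi_e \<phi> - (w - \<zeta>)\<^sup>n h\<close> shows that both
  \<open>\<sigma> \<circ> \<phi>\<close> and \<open>\<phi> \<circ> \<sigma>\<close> are the identity plus an \<open>n\<close>-th power of the local coordinate times a
  holomorphic factor, whose value at the base point is computed from \<open>\<sigma>' = 1 / \<phi>'(\<zeta>)\<close>.\<close>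

lemma higher_deriv_power_mult_centre:
  fixes k :: "complex \<Rightarrow> complex"
  assumes "k holomorphic_on ball z0 r" "0 < r" "j \<le> n"
  shows "(deriv ^^ j) (\<lambda>w. (w - z0) ^ n * k w) z0 = (if j = n then fact n * k z0 else 0)"
proof -
  have "(deriv ^^ j) (\<lambda>w. (w - z0) ^ n * k w) z0 =
     (\<Sum>i = 0..j. of_nat (j choose i) * (deriv ^^ i) (\<lambda>w. (w - z0) ^ n) z0 * (deriv ^^ (j-i)) k z0)"
    by (rule higher_deriv_mult[of _ "ball z0 r"]) (auto simp: assms intro!: holomorphic_intros)
  also have "\<dots> = (\<Sum>i = 0..j. if i = n then fact n * k z0 else 0)"
    using assms(3) by (intro sum.cong) (auto simp: higher_deriv_power pochhammer_fact)
  also have "\<dots> = (if j = n then fact n * k z0 else 0)"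
    using assms(3) by auto
  finally show ?thesis .
qed

lemma higher_deriv_eq_power_mult_on_ball:
  fixes f k :: "complex \<Rightarrow> complex"
  assumes "k holomorphic_on ball z0 r" "0 < r" "j \<le> n"
    and "\<forall>w\<in>ball z0 r. f w = (w - z0) ^ n * k w"
  shows "(deriv ^^ j) f z0 = (if j = n then fact n * k z0 else 0)"
proof -
  have "\<forall>\<^sub>F w in nhds z0. f w = (w - z0) ^ n * k w"
    using eventually_nhds_in_open[of "ball z0 r" z0] assms(2,4) by (auto elim: eventually_mono)
  then have "(deriv ^^ j) f z0 = (deriv ^^ j) (\<lambda>w. (w - z0) ^ n * k w) z0"
    by (rule higher_deriv_cong_ev) simp
  with higher_deriv_power_mult_centre[OF assms(1-3)] show ?thesis by simp
qed

lemma higher_deriv_diff_power_factor: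
  fixes f g k :: "complex \<Rightarrow> complex"
  assumes "f holomorphic_on ball z0 r" "g holomorphic_on ball z0 r" "k holomorphic_on ball z0 r" "0 < r"
    and "\<forall>w\<in>ball z0 r. g w - f w = (w - z0) ^ n * k w" "j \<le> n"
  shows "(deriv ^^ j) g z0 - (deriv ^^ j) f z0 = (if j = n then fact n * k z0 else 0)"
proof -
  have "(deriv ^^ j) (\<lambda>w. g w - f w) z0 = (deriv ^^ j) g z0 - (deriv ^^ j) f z0"
    using assms(4) by (intro higher_deriv_diff[OF assms(2,1) open_ball]) simp
  with higher_deriv_eq_power_mult_on_ball[OF assms(3,4,6,5)] show ?thesis
    by simp
qed

lemma Dn_id_plus_power_mult:
  fixes f k :: "complex \<Rightarrow> complex"
  assumes "k holomorphic_on ball z0 r" "0 < r" "2 \<le> n"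
    and "\<forall>w\<in>ball z0 r. f w = w + (w - z0) ^ n * k w"
  shows "Dn f z0 n = [z0, 1] @ replicate (n - 2) 0 @ [fact n * k z0]"
proof -
  have "(\<lambda>w. w + (w - z0) ^ n * k w) holomorphic_on ball z0 r"
    using assms(1) by (intro holomorphic_intros)
  then have "f holomorphic_on ball z0 r"
    by (rule holomorphic_transform) (use assms(4) in auto)
  moreover have "\<forall>w\<in>ball z0 r. f w - w = (w - z0) ^ n * k w"
    using assms(4) by simp
  ultimately have D: "(deriv ^^ j) f z0 = (deriv ^^ j) (\<lambda>w. w) z0 + (if j = n then fact n * k z0 else 0)"
    if "j \<le> n" for j
    using higher_deriv_diff_power_factor[OF holomorphic_on_ident _ assms(1,2) _ that]
    by (simp only: diff_eq_eq add.commute)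
  have "[0..<Suc n] = [0, 1] @ [2..<n] @ [n]"
    using assms(3) by (simp add: upt_conv_Cons numeral_2_eq_2)
  moreover have "map (\<lambda>j. (deriv ^^ j) f z0) [2..<n] = map (\<lambda>j. 0) [2..<n]"
    by (rule map_cong) (auto simp: D)
  ultimately have "Dn f z0 n = map (\<lambda>j. (deriv ^^ j) f z0) [0, 1] @ replicate (n - 2) 0
      @ [(deriv ^^ n) f z0]"
    by (simp add: Dn_def map_replicate_const)
  then show ?thesis
    using D[of 0] D[of 1] D[of n] assms(3) by simp
qed

lemma tendsto_difference_quotient_holomorphic:
  fixes f g :: "'a \<Rightarrow> complex" and \<sigma> :: "complex \<Rightarrow> complex"
  assumes "\<sigma> holomorphic_on U" "open U" "a \<in> U"
    and "(f \<longlongrightarrow> a) F" "(g \<longlongrightarrow> a) F" "\<forall>\<^sub>F x in F. f x \<noteq> g x"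
  shows "((\<lambda>x. (\<sigma> (f x) - \<sigma> (g x)) / (f x - g x)) \<longlongrightarrow> deriv \<sigma> a) F"
proof (rule tendstoI)
  fix e :: real assume "e > 0"
  have "isCont (deriv \<sigma>) a"
    using assms(1-3) holomorphic_deriv holomorphic_on_imp_continuous_on continuous_on_eq_continuous_at
    by blast
  then obtain d1 where "d1 > 0" and d1: "\<And>w. dist w a < d1 \<Longrightarrow> dist (deriv \<sigma> w) (deriv \<sigma> a) < e / 2"
    using \<open>e > 0\<close> unfolding continuous_at_eps_delta by (metis half_gt_zero dist_commute)
  obtain d2 where "d2 > 0" "ball a d2 \<subseteq> U"
    using assms(2,3) openE by blast
  define d where "d = min d1 d2"
  have "d > 0" "ball a d \<subseteq> U"
    using \<open>d1 > 0\<close> \<open>d2 > 0\<close> \<open>ball a d2 \<subseteq> U\<close> by (auto simp: d_def)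
  have incr: "norm ((\<sigma> u - deriv \<sigma> a * u) - (\<sigma> v - deriv \<sigma> a * v)) \<le> e / 2 * norm (u - v)"
    if "u \<in> ball a d" "v \<in> ball a d" for u v
  proof (rule field_differentiable_bound[of "ball a d" _ "\<lambda>w. deriv \<sigma> w - deriv \<sigma> a"])
    fix z assume z: "z \<in> ball a d"
    then have "(\<sigma> has_field_derivative deriv \<sigma> z) (at z)"
      using assms(1,2) \<open>ball a d \<subseteq> U\<close> holomorphic_derivI by blast
    then show "((\<lambda>w. \<sigma> w - deriv \<sigma> a * w) has_field_derivative deriv \<sigma> z - deriv \<sigma> a)
        (at z within ball a d)"
      by (auto intro!: derivative_eq_intros simp: has_field_derivative_at_within)
    show "norm (deriv \<sigma> z - deriv \<sigma> a) \<le> e / 2"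
      using d1[of z] z by (simp add: d_def dist_norm norm_minus_commute less_imp_le)
  qed (use that in auto)
  have "\<forall>\<^sub>F x in F. f x \<in> ball a d" "\<forall>\<^sub>F x in F. g x \<in> ball a d"
    using tendstoD[OF assms(4) \<open>d > 0\<close>] tendstoD[OF assms(5) \<open>d > 0\<close>]
    by (simp_all add: dist_commute)
  with assms(6) show "\<forall>\<^sub>F x in F. dist ((\<sigma> (f x) - \<sigma> (g x)) / (f x - g x)) (deriv \<sigma> a) < e"
  proof eventually_elim
    case (elim x)
    then have "f x - g x \<noteq> 0" by simp
    then have "dist ((\<sigma> (f x) - \<sigma> (g x)) / (f x - g x)) (deriv \<sigma> a)
        = norm ((\<sigma> (f x) - deriv \<sigma> a * f x) - (\<sigma> (g x) - deriv \<sigma> a * g x)) / norm (f x - g x)"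
      by (simp add: dist_norm norm_divide[symmetric] field_simps)
    also have "\<dots> \<le> e / 2"
      using incr[OF elim(2,3)] \<open>f x - g x \<noteq> 0\<close> by (simp add: divide_le_eq)
    finally show ?case using \<open>e > 0\<close> by simp
  qed
qed

lemma eventually_norm_diff_comparable:
  fixes f :: "complex \<Rightarrow> complex"
  assumes "(f has_field_derivative D) (at z)" "D \<noteq> 0"
  shows "\<forall>\<^sub>F w in at z within S.
    norm D / 2 * norm (w - z) < norm (f z - f w) \<and> norm (f z - f w) < 2 * norm D * norm (w - z)"
proof -
  have slope_lim: "((\<lambda>w. norm ((f w - f z) / (w - z))) \<longlongrightarrow> norm D) (at z within S)"
    using assms(1) unfolding has_field_derivative_iff
    by (intro tendsto_norm) (rule tendsto_mono[OF at_le[OF subset_UNIV]])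
  have "\<forall>\<^sub>F w in at z within S. norm D / 2 < norm ((f w - f z) / (w - z))"
    using order_tendstoD(1)[OF slope_lim, of "norm D / 2"] assms(2) by simp
  moreover have "\<forall>\<^sub>F w in at z within S. norm ((f w - f z) / (w - z)) < 2 * norm D"
    using order_tendstoD(2)[OF slope_lim, of "2 * norm D"] assms(2) by simp
  moreover have "\<forall>\<^sub>F w in at z within S. w \<noteq> z"
    by (simp add: eventually_at_filter)
  ultimately show ?thesis
  proof eventually_elim
    case (elim w)
    then have "norm (f z - f w) = norm ((f w - f z) / (w - z)) * norm (w - z)"
      by (simp add: norm_divide norm_minus_commute)
    with elim show ?case by simp
  qed
qed

lemma power_exponent_unique:
  fixes t s :: "'a \<Rightarrow> real"
  assumes "F \<noteq> bot" "(t \<longlongrightarrow> 0) F" "(s \<longlongrightarrow> s0) F" "s0 > 0" "L > 0"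
    and bounds: "\<forall>\<^sub>F x in F. t x > 0 \<and> L * t x ^ n \<le> t x ^ m * s x \<and> t x ^ m * s x \<le> M * t x ^ n"
  shows "m = n"
proof (rule ccontr)
  assume "m \<noteq> n"
  then consider "n < m" | "m < n" by linarith
  then have "\<forall>\<^sub>F x in F. False"
  proof cases
    case 1
    have "((\<lambda>x. t x ^ (m - n) * s x) \<longlongrightarrow> 0) F"
      using 1 tendsto_mult[OF tendsto_power[OF assms(2), of "m - n"] assms(3)] by (simp add: power_0_left)
    then have "\<forall>\<^sub>F x in F. t x ^ (m - n) * s x < L"
      using \<open>L > 0\<close> by (rule order_tendstoD(2))
    with bounds show ?thesis
    proof eventually_elim
      case (elim x)
      from elim have "L * t x ^ n \<le> t x ^ m * s x" by blast
      also have "\<dots> = (t x ^ (m - n) * s x) * t x ^ n"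
        using 1 by (simp add: power_add[symmetric])
      finally have "L \<le> t x ^ (m - n) * s x"
        by (rule mult_right_le_imp_le) (use elim in simp)
      with elim show ?case by simp
    qed
  next
    case 2
    have "((\<lambda>x. M * t x ^ (n - m)) \<longlongrightarrow> 0) F"
      using 2 tendsto_mult[OF tendsto_const tendsto_power[OF assms(2), of "n - m"], of M]
      by (simp add: power_0_left)
    then have "\<forall>\<^sub>F x in F. M * t x ^ (n - m) < s0 / 2"
      by (rule order_tendstoD(2)) (use \<open>s0 > 0\<close> in simp)
    moreover have "\<forall>\<^sub>F x in F. s0 / 2 < s x"
      using assms(3) by (rule order_tendstoD(1)) (use \<open>s0 > 0\<close> in simp)
    ultimately show ?thesis using bounds
    proof eventually_elim
      case (elim x)
      have "s x * t x ^ m = t x ^ m * s x" by (rule mult.commute)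
      also have "\<dots> \<le> M * t x ^ n" using elim by blast
      also have "\<dots> = (M * t x ^ (n - m)) * t x ^ m"
        using 2 by (simp add: power_add[symmetric])
      finally have "s x \<le> M * t x ^ (n - m)"
        by (rule mult_right_le_imp_le) (use elim in simp)
      with elim show ?case by simp
    qed
  qed
  with assms(1) show False by (simp add: eventually_False)
qed

lemma zero_of_exact_order_from_bounds:
  fixes g :: "complex \<Rightarrow> complex"
  assumes "g holomorphic_on ball z0 r" "0 < r" "g z0 = 0" "z0 islimpt S" "L > 0"
    and bounds: "\<forall>\<^sub>F w in at z0 within S.
      L * norm (w - z0) ^ n \<le> norm (g w) \<and> norm (g w) \<le> M * norm (w - z0) ^ n"
  obtains h r' where "0 < r'" "ball z0 r' \<subseteq> ball z0 r" "h holomorphic_on ball z0 r'"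
    "\<forall>w\<in>ball z0 r'. h w \<noteq> 0" "\<forall>w\<in>ball z0 r'. g w = (w - z0) ^ n * h w"
proof -
  let ?F = "at z0 within S"
  have F: "?F \<noteq> bot"
    using assms(4) trivial_limit_within by blast
  have near: "\<forall>\<^sub>F w in ?F. w \<in> ball z0 \<rho> \<and> w \<noteq> z0" if "\<rho> > 0" for \<rho>
  proof -
    have "\<forall>\<^sub>F w in nhds z0. w \<in> ball z0 \<rho>"
      by (rule eventually_nhds_in_open) (use that in auto)
    then show ?thesis by (simp add: eventually_at_filter eventually_mono)
  qed
  have "\<not> g constant_on ball z0 r"
  proof
    assume "g constant_on ball z0 r"
    then have g0: "\<forall>w\<in>ball z0 r. g w = 0"
      using assms(2,3) by (auto simp: constant_on_def)
    have "\<forall>\<^sub>F w in ?F. False"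
      using near[OF assms(2)] bounds
    proof eventually_elim
      case (elim w)
      then have "0 < L * norm (w - z0) ^ n"
        using assms(5) by simp
      with elim g0 show False by auto
    qed
    with F show False by (simp add: eventually_False)
  qed
  then obtain m h r' where "0 < m" "0 < r'" "ball z0 r' \<subseteq> ball z0 r"
      and h: "h holomorphic_on ball z0 r'" "\<And>w. w \<in> ball z0 r' \<Longrightarrow> h w \<noteq> 0"
      and factor: "\<And>w. w \<in> ball z0 r' \<Longrightarrow> g w = (w - z0) ^ m * h w"
    using holomorphic_factor_zero_nonconstant[OF assms(1) open_ball connected_ball _ assms(3)] assms(2)
    by (metis centre_in_ball)
  have "isCont h z0"
    using h(1) \<open>0 < r'\<close> holomorphic_on_imp_continuous_on continuous_on_eq_continuous_at
    by (metis centre_in_ball open_ball)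
  have "m = n"
  proof (rule power_exponent_unique[OF F])
    show "((\<lambda>w. norm (w - z0)) \<longlongrightarrow> 0) ?F"
      by (intro tendsto_eq_intros) (auto intro: tendsto_ident_at)
    show "((\<lambda>w. norm (h w)) \<longlongrightarrow> norm (h z0)) ?F"
      using \<open>isCont h z0\<close> continuous_at_imp_continuous_at_within continuous_within tendsto_norm by metis
    show "norm (h z0) > 0"
      using h(2) \<open>0 < r'\<close> by simp
    show "\<forall>\<^sub>F w in ?F. norm (w - z0) > 0 \<and> L * norm (w - z0) ^ n \<le> norm (w - z0) ^ m * norm (h w)
        \<and> norm (w - z0) ^ m * norm (h w) \<le> M * norm (w - z0) ^ n"
      using near[OF \<open>0 < r'\<close>] bounds by eventually_elim (simp add: factor norm_mult norm_power)
  qed fact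
  with \<open>0 < r'\<close> \<open>ball z0 r' \<subseteq> ball z0 r\<close> h factor show ?thesis
    using that by blast
qed

lemma deriv_inverse_branch:
  assumes "open U" "\<sigma> holomorphic_on U" "a \<in> U" "\<forall>w\<in>U. f (\<sigma> w) = w"
    and "f field_differentiable at (\<sigma> a)"
  shows "deriv f (\<sigma> a) * deriv \<sigma> a = 1"
proof -
  have "(\<sigma> has_field_derivative deriv \<sigma> a) (at a)"
    using assms(1-3) holomorphic_derivI by blast
  with DERIV_deriv_iff_field_differentiable[THEN iffD2, OF assms(5)]
  have "((f \<circ> \<sigma>) has_field_derivative deriv f (\<sigma> a) * deriv \<sigma> a) (at a)"
    by (rule DERIV_chain)
  moreover have "((f \<circ> \<sigma>) has_field_derivative 1) (at a)"
    using assms(1,3,4) by (intro has_field_derivative_transform_within_open[OF DERIV_ident]) auto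
  ultimately show ?thesis
    by (rule DERIV_unique)
qed

lemma holomorphic_on_difference_quotient_comp:
  fixes f g \<sigma> :: "complex \<Rightarrow> complex"
  assumes "\<sigma> holomorphic_on U" "open U" "f holomorphic_on ball z0 r" "g holomorphic_on ball z0 r"
    and "f ` ball z0 r \<subseteq> U" "g ` ball z0 r \<subseteq> U" "f z0 = g z0" "\<forall>z\<in>ball z0 r - {z0}. f z \<noteq> g z"
  shows "(\<lambda>z. if z = z0 then deriv \<sigma> (f z0) else (\<sigma> (f z) - \<sigma> (g z)) / (f z - g z))
    holomorphic_on ball z0 r" (is "?Q holomorphic_on _")
proof (cases "0 < r")
  case True
  then have "z0 \<in> ball z0 r" by simp
  then have "isCont f z0" "isCont g z0"
    using assms(3,4) by (auto intro!: field_differentiable_imp_continuous_at holomorphic_on_imp_differentiable_at)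
  have near: "\<forall>\<^sub>F z in at z0. z \<in> ball z0 r - {z0}"
    using eventually_at_in_open[OF open_ball \<open>z0 \<in> ball z0 r\<close>] by simp
  have "((\<lambda>z. (\<sigma> (f z) - \<sigma> (g z)) / (f z - g z)) \<longlongrightarrow> deriv \<sigma> (f z0)) (at z0)"
  proof (rule tendsto_difference_quotient_holomorphic[OF assms(1,2)])
    show "f z0 \<in> U" using assms(5) \<open>z0 \<in> ball z0 r\<close> by blast
    show "(f \<longlongrightarrow> f z0) (at z0)" "(g \<longlongrightarrow> f z0) (at z0)"
      using \<open>isCont f z0\<close> \<open>isCont g z0\<close> assms(7) by (simp_all add: isCont_def)
    show "\<forall>\<^sub>F z in at z0. f z \<noteq> g z"
      using near by eventually_elim (use assms(8) in blast)
  qed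
  moreover have "\<forall>\<^sub>F z in at z0. (\<sigma> (f z) - \<sigma> (g z)) / (f z - g z) = ?Q z"
    by (simp add: eventually_at_filter)
  ultimately have "(?Q \<longlongrightarrow> ?Q z0) (at z0 within ball z0 r)"
    using \<open>z0 \<in> ball z0 r\<close> by (simp add: at_within_open[of z0 "ball z0 r"] Lim_transform_eventually)
  moreover have "(\<lambda>z. (\<sigma> (f z) - \<sigma> (g z)) / (f z - g z)) holomorphic_on ball z0 r - {z0}"
    using assms(5,6,8)
    by (intro holomorphic_intros holomorphic_on_compose_gen[OF _ assms(1), unfolded o_def]
        holomorphic_on_subset[OF assms(3)] holomorphic_on_subset[OF assms(4)]) auto
  then have "?Q holomorphic_on ball z0 r - {z0}"
    by (rule holomorphic_transform) simp
  ultimately show ?thesis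
    using no_isolated_singularity'[where K="{z0}" and f="?Q" and S="ball z0 r"] by simp
qed (simp add: ball_empty holomorphic_on_empty)

lemma inverse_branch_image:
  assumes "open U" "\<sigma> holomorphic_on U" "\<forall>w\<in>U. f (\<sigma> w) = w"
  shows "open (\<sigma> ` U)" "\<forall>z\<in>\<sigma> ` U. f z \<in> U \<and> \<sigma> (f z) = z"
proof -
  have "inj_on \<sigma> U"
    using assms(3) by (intro inj_onI) metis
  then show "open (\<sigma> ` U)"
    by (rule open_mapping_thm3[OF assms(2,1)])
  show "\<forall>z\<in>\<sigma> ` U. f z \<in> U \<and> \<sigma> (f z) = z"
    using assms(3) by auto
qed

lemma Dn_comp_inverse_branch:
  fixes f fe h \<sigma> :: "complex \<Rightarrow> complex"
  assumes "h holomorphic_on ball \<zeta> r" "0 < r" "2 \<le> n"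
    and defect: "\<forall>w\<in>ball \<zeta> r. fe w - f w = (w - \<zeta>) ^ n * h w"
    and "open U" "\<sigma> holomorphic_on U" "a \<in> U" "\<sigma> a = \<zeta>" "\<forall>w\<in>U. fe (\<sigma> w) = w"
  shows "Dn (f \<circ> \<sigma>) a n = [a, 1] @ replicate (n - 2) 0 @ [- (fact n * h \<zeta> * deriv \<sigma> a ^ n)]"
proof -
  define s where "s = (\<lambda>w. if w = a then deriv \<sigma> a else (\<sigma> w - \<sigma> a) / (w - a))"
  have "s holomorphic_on U"
    unfolding s_def using assms(6,5) by (rule pole_lemma_open)
  have "open (U \<inter> \<sigma> -` ball \<zeta> r)"
    using assms(5,6) by (intro continuous_open_preimage holomorphic_on_imp_continuous_on) auto
  then obtain \<rho> where "0 < \<rho>" and \<rho>: "ball a \<rho> \<subseteq> U \<inter> \<sigma> -` ball \<zeta> r"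
    using assms(2,7,8) by (elim openE) auto
  define K where "K = (\<lambda>w. - (s w ^ n * h (\<sigma> w)))"
  have "(h \<circ> \<sigma>) holomorphic_on ball a \<rho>"
    using \<rho> by (intro holomorphic_on_compose_gen[OF _ assms(1)] holomorphic_on_subset[OF assms(6)]) auto
  then have "K holomorphic_on ball a \<rho>"
    unfolding K_def using \<open>s holomorphic_on U\<close> \<rho>
    by (auto intro!: holomorphic_intros intro: holomorphic_on_subset simp: o_def)
  moreover have "\<forall>w\<in>ball a \<rho>. (f \<circ> \<sigma>) w = w + (w - a) ^ n * K w"
  proof
    fix w assume "w \<in> ball a \<rho>"
    with \<rho> assms(9) have "\<sigma> w \<in> ball \<zeta> r" "fe (\<sigma> w) = w" by auto
    with defect have "f (\<sigma> w) = w - (\<sigma> w - \<zeta>) ^ n * h (\<sigma> w)"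
      by (auto simp: algebra_simps)
    moreover have "\<sigma> w - \<zeta> = (w - a) * s w"
      using assms(8) by (simp add: s_def)
    ultimately have "f (\<sigma> w) = w - (w - a) ^ n * s w ^ n * h (\<sigma> w)"
      by (simp add: power_mult_distrib)
    then show "(f \<circ> \<sigma>) w = w + (w - a) ^ n * K w"
      by (simp add: K_def)
  qed
  ultimately have "Dn (f \<circ> \<sigma>) a n = [a, 1] @ replicate (n - 2) 0 @ [fact n * K a]"
    by (rule Dn_id_plus_power_mult[OF _ \<open>0 < \<rho>\<close> assms(3)])
  moreover have "fact n * K a = - (fact n * h \<zeta> * deriv \<sigma> a ^ n)"
    using assms(8) by (simp add: K_def s_def)
  ultimately show ?thesis by simp
qed

lemma Dn_inverse_branch_comp:
  fixes f fe h \<sigma> :: "complex \<Rightarrow> complex"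
  assumes "f holomorphic_on ball \<zeta> r" "h holomorphic_on ball \<zeta> r" "0 < r" "2 \<le> n"
    and h_nz: "\<forall>w\<in>ball \<zeta> r. h w \<noteq> 0"
    and defect: "\<forall>w\<in>ball \<zeta> r. fe w - f w = (w - \<zeta>) ^ n * h w"
    and "open U" "\<sigma> holomorphic_on U" "f \<zeta> \<in> U" "\<sigma> (f \<zeta>) = \<zeta>" "\<forall>w\<in>U. fe (\<sigma> w) = w"
  shows "Dn (\<sigma> \<circ> f) \<zeta> n = [\<zeta>, 1] @ replicate (n - 2) 0 @ [- (fact n * h \<zeta> * deriv \<sigma> (f \<zeta>))]"
proof -
  have fe_eq: "\<forall>w\<in>ball \<zeta> r. fe w = f w + (w - \<zeta>) ^ n * h w"
    using defect by (simp add: algebra_simps)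
  have "(\<lambda>w. f w + (w - \<zeta>) ^ n * h w) holomorphic_on ball \<zeta> r"
    using assms(1,2) by (intro holomorphic_intros)
  then have "fe holomorphic_on ball \<zeta> r"
    by (rule holomorphic_transform) (use fe_eq in auto)
  have "open (ball \<zeta> r \<inter> \<sigma> ` U \<inter> f -` U)"
    using assms(1,7) inverse_branch_image(1)[OF assms(7,8,11)]
    by (intro continuous_open_preimage holomorphic_on_imp_continuous_on) (auto intro: holomorphic_on_subset)
  moreover have "\<zeta> \<in> ball \<zeta> r \<inter> \<sigma> ` U \<inter> f -` U"
    using assms(3,9,10) by force
  ultimately obtain \<rho> where "0 < \<rho>" and \<rho>: "ball \<zeta> \<rho> \<subseteq> ball \<zeta> r \<inter> \<sigma> ` U \<inter> f -` U"
    by (elim openE)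
  note fe_inverse = inverse_branch_image(2)[OF assms(7,8,11)]
  define Q where "Q = (\<lambda>z. if z = \<zeta> then deriv \<sigma> (f \<zeta>) else (\<sigma> (f z) - \<sigma> (fe z)) / (f z - fe z))"
  have "Q holomorphic_on ball \<zeta> \<rho>"
    unfolding Q_def using \<rho> fe_inverse h_nz fe_eq assms(3,4)
    by (intro holomorphic_on_difference_quotient_comp[OF assms(8,7)]
        holomorphic_on_subset[OF assms(1)] holomorphic_on_subset[OF \<open>fe holomorphic_on ball \<zeta> r\<close>])
      auto
  then have "(\<lambda>z. - h z * Q z) holomorphic_on ball \<zeta> \<rho>"
    using \<rho> by (auto intro!: holomorphic_intros intro: holomorphic_on_subset[OF assms(2)])
  moreover have "\<forall>z\<in>ball \<zeta> \<rho>. (\<sigma> \<circ> f) z = z + (z - \<zeta>) ^ n * (- h z * Q z)"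
  proof
    fix z assume z: "z \<in> ball \<zeta> \<rho>"
    show "(\<sigma> \<circ> f) z = z + (z - \<zeta>) ^ n * (- h z * Q z)"
    proof (cases "z = \<zeta>")
      case False
      with z \<rho> fe_eq h_nz have defect_z: "(z - \<zeta>) ^ n * h z = fe z - f z" "f z - fe z \<noteq> 0"
        by auto
      have "(z - \<zeta>) ^ n * (- h z * Q z) = - ((z - \<zeta>) ^ n * h z) * Q z"
        by (simp add: algebra_simps)
      also have "\<dots> = (f z - fe z) * Q z"
        using defect_z(1) by simp
      also have "\<dots> = \<sigma> (f z) - z"
        using False defect_z(2) z \<rho> fe_inverse by (auto simp: Q_def)
      finally show ?thesis by simp
    qed (use assms(4,10) in simp)
  qed
  ultimately show ?thesis
    using Dn_id_plus_power_mult[OF _ \<open>0 < \<rho>\<close> assms(4)] by (simp add: Q_def)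
qed

lemma rho_eq_self_on_circle: "norm z = 1 \<Longrightarrow> rho z = z"
  unfolding rho_def by (metis complex_norm_square inverse_unique mult.commute mult_1 of_real_1 power_one)

lemma phi_e_on_circle: "norm w = 1 \<Longrightarrow> phi_e \<phi> w = rho (\<phi> w)"
  by (simp add: phi_e_def rho_eq_self_on_circle)

lemma norm_rho_minus_self:
  assumes "a \<noteq> 0"
  shows "norm (rho a - a) = \<bar>1 - (norm a)\<^sup>2\<bar> / norm a"
proof -
  have "rho a - a = of_real (1 - (norm a)\<^sup>2) / cnj a"
    using assms complex_norm_square[of a] by (simp add: rho_def field_simps)
  then have "norm (rho a - a) = norm (complex_of_real (1 - (norm a)\<^sup>2)) / norm (cnj a)"
    by (simp only: norm_divide)
  then show ?thesis by (simp only: norm_of_real complex_mod_cnj)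
qed

lemma norm_rho_minus_self_bounds:
  assumes "1/2 < norm a" "0 < A * c" "A * c \<le> 1 - (norm a)\<^sup>2" "1 - (norm a)\<^sup>2 \<le> B * c"
  shows "A * c \<le> norm (rho a - a)" "norm (rho a - a) \<le> 2 * B * c"
proof -
  have "0 < 1 - (norm a)\<^sup>2"
    using assms(2,3) by linarith
  then have "norm a \<le> 1"
    using abs_square_less_1[of "norm a"] by simp
  have "a \<noteq> 0"
    using assms(1) by auto
  then have eq: "norm (rho a - a) = (1 - (norm a)\<^sup>2) / norm a"
    using norm_rho_minus_self[of a] \<open>0 < 1 - (norm a)\<^sup>2\<close> by simp
  have "1 - (norm a)\<^sup>2 \<le> (1 - (norm a)\<^sup>2) / norm a"
    using \<open>0 < 1 - (norm a)\<^sup>2\<close> \<open>norm a \<le> 1\<close> \<open>a \<noteq> 0\<close> by (simp add: le_divide_eq)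
  with assms(3) eq show "A * c \<le> norm (rho a - a)" by linarith
  have "1 / norm a \<le> 2"
    using assms(1) by (simp add: divide_le_eq)
  then have "(1 - (norm a)\<^sup>2) * (1 / norm a) \<le> (1 - (norm a)\<^sup>2) * 2"
    by (rule mult_left_mono) (use \<open>0 < 1 - (norm a)\<^sup>2\<close> in simp)
  with assms(4) eq show "norm (rho a - a) \<le> 2 * B * c" by simp
qed

lemma phi_e_has_field_derivative:
  assumes "z \<noteq> 0" "(\<phi> has_field_derivative D) (at (rho z))" "\<phi> (rho z) \<noteq> 0"
  shows "(phi_e \<phi> has_field_derivative cnj D / (z\<^sup>2 * (cnj (\<phi> (rho z)))\<^sup>2)) (at z)"
proof -
  define \<psi> where "\<psi> = cnj \<circ> \<phi> \<circ> cnj"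
  have "(\<psi> has_field_derivative cnj D) (at (inverse z))"
    unfolding \<psi>_def using assms(2) by (intro has_field_derivative_cnj_cnj) (simp add: rho_def)
  moreover have "\<psi> (inverse z) = cnj (\<phi> (rho z))"
    by (simp add: \<psi>_def rho_def)
  moreover have "phi_e \<phi> = (\<lambda>w. inverse (\<psi> (inverse w)))"
    by (simp add: fun_eq_iff phi_e_def rho_def \<psi>_def)
  ultimately show ?thesis
    using assms(1,3)
    by (auto intro!: derivative_eq_intros DERIV_chain2[of \<psi>] simp: power2_eq_square field_simps)
qed

lemma deriv_phi_e_on_circle:
  assumes "norm \<zeta> = 1" "norm (\<phi> \<zeta>) = 1" "\<phi> field_differentiable at \<zeta>"
  shows "deriv (phi_e \<phi>) \<zeta> = cnj (deriv \<phi> \<zeta>) / (\<zeta>\<^sup>2 * (cnj (\<phi> \<zeta>))\<^sup>2)"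
proof -
  have "\<zeta> \<noteq> 0" "\<phi> \<zeta> \<noteq> 0"
    using assms(1,2) by auto
  then show ?thesis
    using phi_e_has_field_derivative[of \<zeta> \<phi> "deriv \<phi> \<zeta>"] assms(3) rho_eq_self_on_circle[OF assms(1)]
    by (simp add: DERIV_imp_deriv DERIV_deriv_iff_field_differentiable)
qed

lemma open_rho_vimage:
  assumes "open W"
  shows "open {z. z \<noteq> 0 \<and> rho z \<in> W}"
proof -
  have "continuous_on (- {0}) rho"
    unfolding rho_def by (intro continuous_on_inverse continuous_on_cnj continuous_on_id) auto
  then have "open (- {0} \<inter> rho -` W)"
    using assms by (intro continuous_open_preimage) auto
  moreover have "- {0} \<inter> rho -` W = {z. z \<noteq> 0 \<and> rho z \<in> W}"
    by auto
  ultimately show ?thesis by simp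
qed

lemma holomorphic_on_phi_e:
  assumes "\<phi> holomorphic_on W" "open W" "\<forall>z\<in>W. \<phi> z \<noteq> 0"
  shows "phi_e \<phi> holomorphic_on {z. z \<noteq> 0 \<and> rho z \<in> W}"
proof -
  have "phi_e \<phi> field_differentiable at z" if "z \<noteq> 0" "rho z \<in> W" for z
    using phi_e_has_field_derivative[OF that(1) holomorphic_derivI[OF assms(1,2) that(2)]] assms(3) that(2)
    by (auto simp: field_differentiable_def)
  then show ?thesis
    using open_rho_vimage[OF assms(2)]
    by (simp add: holomorphic_on_open field_differentiable_def)
qed

lemma rational_map_and_phi_e_holomorphic_near_circle:
  fixes p q :: "complex poly"
  assumes "\<forall>z. \<phi> z = poly p z / poly q z" "norm \<zeta> = 1" "\<phi> \<zeta> \<noteq> 0"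
  obtains r where "0 < r" "\<phi> holomorphic_on ball \<zeta> r" "phi_e \<phi> holomorphic_on ball \<zeta> r"
proof -
  define W where "W = {z. poly p z \<noteq> 0 \<and> poly q z \<noteq> 0}"
  have "open W"
    unfolding W_def by (intro open_Collect_conj open_Collect_neq continuous_intros)
  have "\<phi> = (\<lambda>z. poly p z / poly q z)"
    using assms(1) by blast
  then have "\<phi> holomorphic_on W" "\<forall>z\<in>W. \<phi> z \<noteq> 0"
    by (auto simp: W_def intro!: holomorphic_intros)
  \<comment> \<open>\<open>poly q \<zeta> \<noteq> 0\<close>, since otherwise \<open>\<phi> \<zeta> = 0\<close> by the convention \<open>x / 0 = 0\<close>\<close>
  have "\<zeta> \<in> W" "\<zeta> \<noteq> 0" "rho \<zeta> = \<zeta>"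
    using assms by (auto simp: W_def rho_eq_self_on_circle)
  then have "\<zeta> \<in> W \<inter> {z. z \<noteq> 0 \<and> rho z \<in> W}" by simp
  moreover have "open (W \<inter> {z. z \<noteq> 0 \<and> rho z \<in> W})"
    using \<open>open W\<close> open_rho_vimage by blast
  ultimately obtain r where "0 < r" "ball \<zeta> r \<subseteq> W" "ball \<zeta> r \<subseteq> {z. z \<noteq> 0 \<and> rho z \<in> W}"
    by (elim openE) auto
  with holomorphic_on_phi_e[OF \<open>\<phi> holomorphic_on W\<close> \<open>open W\<close> \<open>\<forall>z\<in>W. \<phi> z \<noteq> 0\<close>]
  show ?thesis
    using that holomorphic_on_subset \<open>\<phi> holomorphic_on W\<close> by blast
qed

lemma order_of_contact_reflection_bounds:
  assumes contact: "order_of_contact \<phi> n \<zeta>"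
    and "(\<phi> has_field_derivative D) (at \<zeta>)" "D \<noteq> 0"
  obtains L M where "0 < L" "\<forall>\<^sub>F w in at \<zeta> within sphere 0 1.
    L * norm (w - \<zeta>) ^ n \<le> norm (rho (\<phi> w) - \<phi> w) \<and> norm (rho (\<phi> w) - \<phi> w) \<le> M * norm (w - \<zeta>) ^ n"
proof -
  let ?F = "at \<zeta> within sphere 0 1"
  obtain A B where "0 < A" "0 < B" and AB: "\<forall>\<^sub>F w in ?F.
      A \<le> (1 - (norm (\<phi> w))\<^sup>2) / (norm (\<phi> \<zeta> - \<phi> w)) ^ n \<and>
      (1 - (norm (\<phi> w))\<^sup>2) / (norm (\<phi> \<zeta> - \<phi> w)) ^ n \<le> B"
    and "norm (\<phi> \<zeta>) = 1"
    using contact unfolding order_of_contact_def by blast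
  have "((\<lambda>w. norm (\<phi> w)) \<longlongrightarrow> 1) ?F"
    using DERIV_isCont[OF assms(2)] \<open>norm (\<phi> \<zeta>) = 1\<close>
    by (metis continuous_at_imp_continuous_at_within continuous_within tendsto_norm)
  then have "\<forall>\<^sub>F w in ?F. 1/2 < norm (\<phi> w)"
    by (rule order_tendstoD(1)) simp
  with eventually_norm_diff_comparable[OF assms(2,3)] AB
  have "\<forall>\<^sub>F w in ?F.
      A * (norm D / 2) ^ n * norm (w - \<zeta>) ^ n \<le> norm (rho (\<phi> w) - \<phi> w) \<and>
      norm (rho (\<phi> w) - \<phi> w) \<le> 2 * B * (2 * norm D) ^ n * norm (w - \<zeta>) ^ n"
  proof eventually_elim
    case (elim w)
    define d where "d = norm (w - \<zeta>)"
    define e where "e = norm (\<phi> \<zeta> - \<phi> w)"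
    have e_lower: "norm D / 2 * d < e" and e_upper: "e < 2 * norm D * d"
      using elim by (simp_all add: d_def e_def)
    then have "0 < d" "0 < e"
      using assms(3) by (auto simp: d_def zero_less_mult_iff)
    then have "A * e ^ n \<le> 1 - (norm (\<phi> w))\<^sup>2" "1 - (norm (\<phi> w))\<^sup>2 \<le> B * e ^ n"
      using elim by (simp_all add: e_def pos_le_divide_eq pos_divide_le_eq)
    then have bounds: "A * e ^ n \<le> norm (rho (\<phi> w) - \<phi> w)" "norm (rho (\<phi> w) - \<phi> w) \<le> 2 * B * e ^ n"
      using norm_rho_minus_self_bounds[of "\<phi> w" A "e ^ n" B] elim \<open>0 < A\<close> \<open>0 < e\<close> by simp_all
    have "A * (norm D / 2) ^ n * d ^ n = A * (norm D / 2 * d) ^ n"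
      by (simp only: power_mult_distrib mult.assoc)
    also have "\<dots> \<le> A * e ^ n"
      using e_lower \<open>0 < d\<close> \<open>0 < A\<close> by (intro mult_left_mono power_mono) auto
    finally have lower: "A * (norm D / 2) ^ n * d ^ n \<le> norm (rho (\<phi> w) - \<phi> w)"
      using bounds(1) by linarith
    have "2 * B * e ^ n \<le> 2 * B * (2 * norm D * d) ^ n"
      using e_upper \<open>0 < e\<close> \<open>0 < B\<close> by (intro mult_left_mono power_mono) auto
    also have "\<dots> = 2 * B * (2 * norm D) ^ n * d ^ n"
      by (simp only: power_mult_distrib mult.assoc)
    finally have upper: "norm (rho (\<phi> w) - \<phi> w) \<le> 2 * B * (2 * norm D) ^ n * d ^ n"
      using bounds(2) by linarith
    from lower upper show ?case by (simp add: d_def)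
  qed
  moreover have "0 < A * (norm D / 2) ^ n"
    using \<open>0 < A\<close> assms(3) by simp
  ultimately show ?thesis
    using that by blast
qed

lemma unit_circle_islimpt: "norm \<zeta> = 1 \<Longrightarrow> \<zeta> islimpt sphere (0::complex) 1"
proof (rule connected_imp_perfect)
  have "1 \<in> sphere (0::complex) 1" "-1 \<in> sphere (0::complex) 1"
    by auto
  then show "sphere (0::complex) 1 \<noteq> {x}" for x
    by (metis equals0D insertE one_neq_neg_one)
qed (simp_all add: connected_sphere)

lemma reflection_defect_factor:
  assumes "order_of_contact \<phi> n \<zeta>" "norm \<zeta> = 1" "0 < r"
    and "\<phi> holomorphic_on ball \<zeta> r" "phi_e \<phi> holomorphic_on ball \<zeta> r" "deriv \<phi> \<zeta> \<noteq> 0"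
  obtains h r' where "0 < r'" "ball \<zeta> r' \<subseteq> ball \<zeta> r" "h holomorphic_on ball \<zeta> r'"
    "\<forall>w\<in>ball \<zeta> r'. h w \<noteq> 0" "\<forall>w\<in>ball \<zeta> r'. phi_e \<phi> w - \<phi> w = (w - \<zeta>) ^ n * h w"
proof -
  have "(\<phi> has_field_derivative deriv \<phi> \<zeta>) (at \<zeta>)"
    using assms(3,4) by (intro holomorphic_derivI[of _ "ball \<zeta> r"]) auto
  then obtain L M where "0 < L" and bounds: "\<forall>\<^sub>F w in at \<zeta> within sphere 0 1.
      L * norm (w - \<zeta>) ^ n \<le> norm (rho (\<phi> w) - \<phi> w) \<and> norm (rho (\<phi> w) - \<phi> w) \<le> M * norm (w - \<zeta>) ^ n"
    by (rule order_of_contact_reflection_bounds[OF assms(1) _ assms(6)])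
  have "\<forall>\<^sub>F w in at \<zeta> within sphere 0 1. phi_e \<phi> w = rho (\<phi> w)"
    by (auto simp: eventually_at_filter phi_e_on_circle)
  with bounds have defect_bounds: "\<forall>\<^sub>F w in at \<zeta> within sphere 0 1.
      L * norm (w - \<zeta>) ^ n \<le> norm (phi_e \<phi> w - \<phi> w) \<and> norm (phi_e \<phi> w - \<phi> w) \<le> M * norm (w - \<zeta>) ^ n"
    by eventually_elim simp
  have "(\<lambda>w. phi_e \<phi> w - \<phi> w) holomorphic_on ball \<zeta> r"
    using assms(4,5) by (intro holomorphic_intros)
  moreover have "phi_e \<phi> \<zeta> - \<phi> \<zeta> = 0"
    using assms(1,2) by (simp add: phi_e_on_circle rho_eq_self_on_circle order_of_contact_def)
  ultimately obtain h r' where "0 < r'" "ball \<zeta> r' \<subseteq> ball \<zeta> r" "h holomorphic_on ball \<zeta> r'"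
    "\<forall>w\<in>ball \<zeta> r'. h w \<noteq> 0" "\<forall>w\<in>ball \<zeta> r'. phi_e \<phi> w - \<phi> w = (w - \<zeta>) ^ n * h w"
    by (rule zero_of_exact_order_from_bounds[OF _ assms(3) _ unit_circle_islimpt[OF assms(2)] \<open>0 < L\<close>
        defect_bounds])
  then show ?thesis by (rule that)
qed

theorem mainTheorem9:
  fixes \<phi> \<sigma> :: "complex \<Rightarrow> complex" and n :: nat and \<zeta> :: complex and U :: "complex set"
  assumes "rational_self_map \<phi>"
    and "even n" and "n > 0"
    and "norm \<zeta> = 1"
    and "order_of_contact \<phi> n \<zeta>"
    and "open U" and "\<phi> \<zeta> \<in> U" and "\<sigma> holomorphic_on U"
    and "\<sigma> (\<phi> \<zeta>) = \<zeta>"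
    and "\<forall>w \<in> U. phi_e \<phi> (\<sigma> w) = w"
  shows "(deriv ^^ n) \<phi> \<zeta> - (deriv ^^ n) (phi_e \<phi>) \<zeta> \<noteq> 0
       \<and> Dn (\<sigma> \<circ> \<phi>) \<zeta> n = [\<zeta>, 1] @ replicate (n - 2) 0 @
            [((deriv ^^ n) \<phi> \<zeta> - (deriv ^^ n) (phi_e \<phi>) \<zeta>) / deriv \<phi> \<zeta>]
       \<and> Dn (\<phi> \<circ> \<sigma>) (\<phi> \<zeta>) n = [\<phi> \<zeta>, 1] @ replicate (n - 2) 0 @
            [((deriv ^^ n) \<phi> \<zeta> - (deriv ^^ n) (phi_e \<phi>) \<zeta>) / (deriv \<phi> \<zeta>) ^ n]"
proof -
  have "norm (\<phi> \<zeta>) = 1"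
    using assms(5) by (simp add: order_of_contact_def)
  \<comment> \<open>evenness of \<open>n\<close> is only needed to exclude \<open>n = 1\<close>\<close>
  have "2 \<le> n"
    using assms(2,3) by presburger
  obtain p q :: "complex poly" where "\<forall>z. \<phi> z = poly p z / poly q z"
    using assms(1) unfolding rational_self_map_def by blast
  then obtain r where "0 < r" and holo: "\<phi> holomorphic_on ball \<zeta> r" "phi_e \<phi> holomorphic_on ball \<zeta> r"
    by (rule rational_map_and_phi_e_holomorphic_near_circle[OF _ assms(4)]) (use \<open>norm (\<phi> \<zeta>) = 1\<close> in auto)
  then have "\<phi> field_differentiable at \<zeta>" "phi_e \<phi> field_differentiable at \<zeta>"
    by (auto intro: holomorphic_on_imp_differentiable_at)
  then have inv: "deriv (phi_e \<phi>) \<zeta> * deriv \<sigma> (\<phi> \<zeta>) = 1" and "deriv \<phi> \<zeta> \<noteq> 0"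
    using deriv_inverse_branch[OF assms(6,8,7,10)] deriv_phi_e_on_circle[of \<zeta> \<phi>, OF assms(4) \<open>norm (\<phi> \<zeta>) = 1\<close>]
      assms(9) by auto
  then obtain h r' where "0 < r'" "ball \<zeta> r' \<subseteq> ball \<zeta> r" and h: "h holomorphic_on ball \<zeta> r'"
    "\<forall>w\<in>ball \<zeta> r'. h w \<noteq> 0" "\<forall>w\<in>ball \<zeta> r'. phi_e \<phi> w - \<phi> w = (w - \<zeta>) ^ n * h w"
    by (elim reflection_defect_factor[OF assms(5,4) \<open>0 < r\<close> holo])
  note holo' = holo[THEN holomorphic_on_subset, OF \<open>ball \<zeta> r' \<subseteq> ball \<zeta> r\<close>]
  note derivs = higher_deriv_diff_power_factor[OF holo' h(1) \<open>0 < r'\<close> h(3)]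
  have c: "(deriv ^^ n) \<phi> \<zeta> - (deriv ^^ n) (phi_e \<phi>) \<zeta> = - (fact n * h \<zeta>)"
    by (subst minus_diff_eq[symmetric]) (simp add: derivs)
  have "deriv \<sigma> (\<phi> \<zeta>) = 1 / deriv \<phi> \<zeta>"
    using derivs[of 1] \<open>2 \<le> n\<close> inv \<open>deriv \<phi> \<zeta> \<noteq> 0\<close> by (simp add: field_simps)
  moreover have "h \<zeta> \<noteq> 0"
    using h(2) \<open>0 < r'\<close> by simp
  moreover note Dn_inverse_branch_comp[OF holo'(1) h(1) \<open>0 < r'\<close> \<open>2 \<le> n\<close> h(2,3) assms(6,8,7,9,10)]
    and Dn_comp_inverse_branch[OF h(1) \<open>0 < r'\<close> \<open>2 \<le> n\<close> h(3) assms(6,8,7,9,10)]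
  ultimately show ?thesis
    unfolding c by (simp add: field_simps)
qed

end
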